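(* Let $0<\epsilon\le 1$, $r>0$ be constants, $p_2=\frac{1-\epsilon}{n}$, $p_3=\frac{r}{n\ln n}$ (so $p_2=0$ when $\epsilon=1$), and $K_0=\max\{1,\tfrac{2(9+\epsilon)}{r}\}$. For any two distinct vertices $v_1,v_2$ of $\mathbb{G}(n,p_2,p_3)$, $$\Pr\big[|C_{\{v_1,v_2\}}|\ge K_0\ln n\big]\le n^{I_{\epsilon,r}+o(1)}\qquad(n\to\infty),$$ where $I_{\epsilon,r}=\int_0^{\epsilon/r}[1-\lambda(\omega)+\ln\lambda(\omega)]d\omega=-\frac1r\big[\epsilon-\frac{\epsilon^2}{2}+(1-\epsilon)\ln(1-\epsilon)\big]$ (with $(1-\epsilon)\ln(1-\epsilon)=0$ for $\epsilon=1$) and $\lambda(x)=1-\epsilon+rx$.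
   Context: $\mathbb{G}(n,p_2,p_3)$ is the random hypergraph on a vertex set $V$ with $|V|=n$ in which each of the $\binom n2$ possible 2-element edges is present with probability $p_2$ and each of the $\binom n3$ possible 3-element hyperedges is present with probability $p_3$, all independently. Propagation process from a set of vertices: one maintains a set $\mathcal{Y}_t$ of active vertices and a set $\mathcal{D}_t$ of inactive vertices; vertices in neither set are unexplored. At time $t=0,1,2,\dots$, while $\mathcal{Y}_t\neq\emptyset$, pick an active vertex $v_t\in\mathcal{Y}_t$ and let $U_t$ be the set of unexplored vertices $u$ such that $\{v_t,u\}$ is a 2-edge or $\{v_t,u,w\}$ is a 3-edge for some $w\in\mathcal{D}_t$; set $\mathcal{Y}_{t+1}=(\mathcal{Y}_t\cup U_t)\setminus\{v_t\}$ and $\mathcal{D}_{t+1}=\mathcal{D}_t\cup\{v_t\}$. The process stops at $T=\min\{t:\mathcal{Y}_t=\emptyset\}$. $C_{\{v_1,v_2\}}$ denotes $\mathcal{D}_T$ for the process started from $\mathcal{Y}_0=\{v_1,v_2\}$, $\mathcal{D}_0=\emptyset$, so $|C_{\{v_1,v_2\}}|=T$. *)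

theory Defs
  imports Complex_Main
begin

definition pairs :: "nat \<Rightarrow> nat set set" where
  "pairs n = {e. e \<subseteq> {..<n} \<and> card e = 2}"

definition triples :: "nat \<Rightarrow> nat set set" where
  "triples n = {e. e \<subseteq> {..<n} \<and> card e = 3}"

text \<open>Probability of an event P (a predicate on the pair (E2,E3) of edge sets) in
  the random hypergraph G(n,p2,p3): each 2-set present independently with prob. p2,
  each 3-set present independently with prob. p3 (product measure written out).\<close>

definition hyp_weight :: "nat \<Rightarrow> real \<Rightarrow> real \<Rightarrow> nat set set \<Rightarrow> nat set set \<Rightarrow> real" where
  "hyp_weight n p2 p3 E2 E3 =
     p2 ^ card E2 * (1 - p2) ^ (card (pairs n) - card E2) *
     p3 ^ card E3 * (1 - p3) ^ (card (triples n) - card E3)"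

definition hyp_prob :: "nat \<Rightarrow> real \<Rightarrow> real \<Rightarrow> (nat set set \<Rightarrow> nat set set \<Rightarrow> bool) \<Rightarrow> real" where
  "hyp_prob n p2 p3 P =
     (\<Sum>E2\<in>Pow (pairs n). \<Sum>E3\<in>Pow (triples n).
        if P E2 E3 then hyp_weight n p2 p3 E2 E3 else 0)"

text \<open>One step of the propagation process on state (Y_t, D_t). The active vertex
  v_t is chosen as the minimum of Y_t (the final set does not depend on the choice).\<close>

definition prop_step :: "nat \<Rightarrow> nat set set \<Rightarrow> nat set set \<Rightarrow> nat set \<times> nat set \<Rightarrow> nat set \<times> nat set" where
  "prop_step n E2 E3 = (\<lambda>(Y, D).
     if Y = {} then (Y, D) else
     (let v = Min Y;
          U = {u \<in> {..<n}. u \<notin> Y \<and> u \<notin> D \<and>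
                 ({v, u} \<in> E2 \<or> (\<exists>w\<in>D. {v, u, w} \<in> E3))}
      in ((Y \<union> U) - {v}, D \<union> {v})))"

definition prop_state :: "nat \<Rightarrow> nat set set \<Rightarrow> nat set set \<Rightarrow> nat set \<Rightarrow> nat \<Rightarrow> nat set \<times> nat set" where
  "prop_state n E2 E3 Y0 t = (prop_step n E2 E3 ^^ t) (Y0, {})"

definition stop_time :: "nat \<Rightarrow> nat set set \<Rightarrow> nat set set \<Rightarrow> nat set \<Rightarrow> nat" where
  "stop_time n E2 E3 Y0 = (LEAST t. fst (prop_state n E2 E3 Y0 t) = {})"

definition component :: "nat \<Rightarrow> nat set set \<Rightarrow> nat set set \<Rightarrow> nat \<Rightarrow> nat \<Rightarrow> nat set" where
  "component n E2 E3 v1 v2 =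
     snd (prop_state n E2 E3 {v1, v2} (stop_time n E2 E3 {v1, v2}))"

definition I_const :: "real \<Rightarrow> real \<Rightarrow> real" where
  "I_const \<epsilon> r = - (1 / r) * (\<epsilon> - \<epsilon>^2 / 2 +
      (if \<epsilon> = 1 then 0 else (1 - \<epsilon>) * ln (1 - \<epsilon>)))"

end

theory Submission
  imports Defs "HOL-Real_Asymp.Real_Asymp"
begin

text \<open>
  The proof is an exponential-moment (Chernoff) argument on the exploration process.
  If the component of \<open>{v1, v2}\<close> has at least \<open>K\<^sub>0 ln n\<close> vertices, the process survives
  \<open>k \<approx> \<epsilon> ln n / r\<close> steps, so the numbers \<open>|U\<^sub>s|\<close> of newly activated vertices satisfy
  \<open>\<Sum>\<^sub>s\<^sub><\<^sub>t |U\<^sub>s| \<ge> t - 1\<close> for every \<open>t \<le> k\<close>; by summation by parts, for decreasing weights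
  \<open>\<theta>\<^sub>t \<ge> 0\<close> this gives \<open>\<Sum>\<^sub>t \<theta>\<^sub>t |U\<^sub>t| \<ge> \<Sum>\<^sub>t \<theta>\<^sub>t - \<theta>\<^sub>0\<close>.  Revealing edges only when the process first examines them,
  \<open>|U\<^sub>t|\<close> is dominated by a sum of at most \<open>n\<close> independent indicators of total mean
  \<open>\<lambda>\<^sub>t = n (p\<^sub>2 + t p\<^sub>3) = 1 - \<epsilon> + r t / ln n\<close>, so \<open>E exp (\<Sum>\<^sub>t \<theta>\<^sub>t |U\<^sub>t|) \<le> exp (\<Sum>\<^sub>t \<lambda>\<^sub>t (e\<^bsup>\<theta>\<^sub>t\<^esup> - 1))\<close>.
  Markov's inequality with the optimal choice \<open>\<theta>\<^sub>t = - ln \<lambda>\<^bsub>t+1\<^esub>\<close> turns the exponent into a Riemann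
  sum of \<open>1 - \<lambda> + ln \<lambda>\<close>, which is \<open>I\<^sub>\<epsilon>\<^sub>,\<^sub>r ln n + O (ln ln n)\<close>.
\<close>

section \<open>Independent random subsets of a finite set\<close>

definition bernoulli_weight :: "('a \<Rightarrow> real) \<Rightarrow> 'a set \<Rightarrow> 'a set \<Rightarrow> real" where
  "bernoulli_weight p E U = (\<Prod>e\<in>E. p e) * (\<Prod>e\<in>U - E. 1 - p e)"

lemma bernoulli_weight_nonneg:
  assumes "\<forall>e\<in>U. 0 \<le> p e \<and> p e \<le> 1" "E \<subseteq> U"
  shows "0 \<le> bernoulli_weight p E U"
  unfolding bernoulli_weight_def using assms by (intro mult_nonneg_nonneg prod_nonneg) auto

lemma sum_bernoulli_weight_eq_1:
  "finite U \<Longrightarrow> (\<Sum>E\<in>Pow U. bernoulli_weight p E U) = 1"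
  using prod_add[of U p "\<lambda>e. 1 - p e"] unfolding bernoulli_weight_def by simp

lemma bernoulli_weight_Un:
  assumes "finite A" "finite B" "A \<inter> B = {}" "T \<subseteq> A" "S \<subseteq> B"
  shows "bernoulli_weight p (T \<union> S) (A \<union> B) = bernoulli_weight p T A * bernoulli_weight p S B"
proof -
  have fin: "finite T" "finite S" using assms finite_subset by blast+
  have diff: "(A \<union> B) - (T \<union> S) = (A - T) \<union> (B - S)" using assms by auto
  have "(\<Prod>e\<in>T \<union> S. p e) = (\<Prod>e\<in>T. p e) * (\<Prod>e\<in>S. p e)"
    by (rule prod.union_disjoint) (use fin assms in auto)
  moreover have "(\<Prod>e\<in>(A \<union> B) - (T \<union> S). 1 - p e) = (\<Prod>e\<in>A - T. 1 - p e) * (\<Prod>e\<in>B - S. 1 - p e)"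
    unfolding diff by (rule prod.union_disjoint) (use assms in auto)
  ultimately show ?thesis unfolding bernoulli_weight_def by (simp add: ac_simps)
qed

lemma bij_betw_Un_Pow:
  assumes "A \<inter> B = {}"
  shows "bij_betw (\<lambda>(T, S). T \<union> S) (Pow A \<times> Pow B) (Pow (A \<union> B))"
proof (rule bij_betw_byWitness[where f' = "\<lambda>E. (E \<inter> A, E \<inter> B)"])
  show "\<forall>x\<in>Pow A \<times> Pow B. (\<lambda>E. (E \<inter> A, E \<inter> B)) ((\<lambda>(T, S). T \<union> S) x) = x"
    using assms by auto
qed auto

lemma sum_Pow_Un_bernoulli_weight:
  assumes "finite A" "finite B" "A \<inter> B = {}"
  shows "(\<Sum>E\<in>Pow (A \<union> B). bernoulli_weight p E (A \<union> B) * f E)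
       = (\<Sum>T\<in>Pow A. \<Sum>S\<in>Pow B. bernoulli_weight p T A * bernoulli_weight p S B * f (T \<union> S))"
proof -
  have "(\<Sum>E\<in>Pow (A \<union> B). bernoulli_weight p E (A \<union> B) * f E)
      = (\<Sum>x\<in>Pow A \<times> Pow B. (\<lambda>E. bernoulli_weight p E (A \<union> B) * f E) ((\<lambda>(T, S). T \<union> S) x))"
    by (rule sum.reindex_bij_betw[symmetric, OF bij_betw_Un_Pow[OF assms(3)]])
  also have "\<dots> = (\<Sum>x\<in>Pow A \<times> Pow B.
      bernoulli_weight p (fst x) A * bernoulli_weight p (snd x) B * f (fst x \<union> snd x))"
    by (rule sum.cong) (auto simp: bernoulli_weight_Un[OF assms])
  finally show ?thesis by (simp add: sum.cartesian_product case_prod_beta)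
qed

lemma sum_bernoulli_weight_prod_disjoint:
  assumes "finite A" "finite N" "\<forall>u\<in>A. G u \<subseteq> N"
    and "\<forall>u\<in>A. \<forall>u'\<in>A. u \<noteq> u' \<longrightarrow> G u \<inter> G u' = {}"
  shows "(\<Sum>E\<in>Pow N. bernoulli_weight p E N * (\<Prod>u\<in>A. h u (E \<inter> G u)))
       = (\<Prod>u\<in>A. \<Sum>T\<in>Pow (G u). bernoulli_weight p T (G u) * h u T)"
  using assms
proof (induction A arbitrary: N rule: finite_induct)
  case empty
  then show ?case using sum_bernoulli_weight_eq_1 by simp
next
  case (insert a A N)
  let ?M = "N - G a"
  have N: "N = G a \<union> ?M" using insert by auto
  have fin: "finite (G a)" "finite ?M" using insert finite_subset by auto
  have IH: "(\<Sum>S\<in>Pow ?M. bernoulli_weight p S ?M * (\<Prod>u\<in>A. h u (S \<inter> G u)))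
       = (\<Prod>u\<in>A. \<Sum>T\<in>Pow (G u). bernoulli_weight p T (G u) * h u T)"
    by (rule insert.IH) (use insert in auto)
  have split: "(\<Prod>u\<in>insert a A. h u ((T \<union> S) \<inter> G u)) = h a T * (\<Prod>u\<in>A. h u (S \<inter> G u))"
    if "T \<subseteq> G a" "S \<subseteq> ?M" for T S
  proof -
    have "(T \<union> S) \<inter> G u = S \<inter> G u" if "u \<in> A" for u
      using insert.prems(3) \<open>T \<subseteq> G a\<close> that insert.hyps(2) by fastforce
    moreover have "(T \<union> S) \<inter> G a = T" using that by auto
    ultimately show ?thesis using insert.hyps by simp
  qed
  have "(\<Sum>E\<in>Pow N. bernoulli_weight p E N * (\<Prod>u\<in>insert a A. h u (E \<inter> G u)))
      = (\<Sum>T\<in>Pow (G a). \<Sum>S\<in>Pow ?M. bernoulli_weight p T (G a) * bernoulli_weight p S ?M *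
           (\<Prod>u\<in>insert a A. h u ((T \<union> S) \<inter> G u)))"
    using sum_Pow_Un_bernoulli_weight[OF fin Diff_disjoint, of p] N by simp
  also have "\<dots> = (\<Sum>T\<in>Pow (G a). \<Sum>S\<in>Pow ?M. (bernoulli_weight p T (G a) * h a T) *
           (bernoulli_weight p S ?M * (\<Prod>u\<in>A. h u (S \<inter> G u))))"
    by (intro sum.cong refl) (simp add: split)
  also have "\<dots> = (\<Prod>u\<in>insert a A. \<Sum>T\<in>Pow (G u). bernoulli_weight p T (G u) * h u T)"
    using insert.hyps by (simp add: sum_product IH[symmetric])
  finally show ?case .
qed

lemma one_minus_prod_one_minus_le_sum:
  fixes p :: "'a \<Rightarrow> real"
  assumes "finite G" "\<forall>e\<in>G. 0 \<le> p e \<and> p e \<le> 1"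
  shows "1 - (\<Prod>e\<in>G. 1 - p e) \<le> (\<Sum>e\<in>G. p e)"
  using assms
proof (induction G rule: finite_induct)
  case (insert x F)
  have "0 \<le> (\<Prod>e\<in>F. 1 - p e)" "(\<Prod>e\<in>F. 1 - p e) \<le> 1"
    using insert.prems by (auto intro: prod_nonneg prod_le_1)
  then have "p x * (\<Prod>e\<in>F. 1 - p e) \<le> p x" using insert.prems by (simp add: mult_left_le)
  then show ?case using insert by (simp add: algebra_simps)
qed simp

lemma sum_bernoulli_weight_nonempty_le_exp:
  fixes p :: "'a \<Rightarrow> real"
  assumes "finite G" "\<forall>e\<in>G. 0 \<le> p e \<and> p e \<le> 1" "1 \<le> c"
  shows "(\<Sum>T\<in>Pow G. bernoulli_weight p T G * (if T \<noteq> {} then c else 1))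
         \<le> exp ((c - 1) * (\<Sum>e\<in>G. p e))"
proof -
  have "(\<Sum>T\<in>Pow G. bernoulli_weight p T G * (if T \<noteq> {} then c else 1))
      = (\<Sum>T\<in>Pow G. c * bernoulli_weight p T G
           - (if T = {} then (c - 1) * bernoulli_weight p T G else 0))"
    by (rule sum.cong) (auto simp: algebra_simps)
  also have "\<dots> = 1 + (c - 1) * (1 - (\<Prod>e\<in>G. 1 - p e))"
    using assms(1) sum_bernoulli_weight_eq_1[OF assms(1), of p]
    by (simp add: sum_subtractf sum_distrib_left[symmetric] bernoulli_weight_def algebra_simps)
  also have "\<dots> \<le> 1 + (c - 1) * (\<Sum>e\<in>G. p e)"
    using one_minus_prod_one_minus_le_sum[OF assms(1,2)] assms(3) by (simp add: mult_left_mono)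
  also have "\<dots> \<le> exp ((c - 1) * (\<Sum>e\<in>G. p e))"
    using exp_ge_add_one_self by (simp add: add.commute)
  finally show ?thesis .
qed

text \<open>The events \<open>E \<inter> G u \<noteq> {}\<close> are independent, each of probability at most \<open>q\<close>.\<close>

lemma sum_bernoulli_weight_exp_card_hit_le:
  fixes p :: "'a \<Rightarrow> real" and \<theta> :: real
  assumes "finite A" "finite N" "\<forall>u\<in>A. G u \<subseteq> N"
    and "\<forall>u\<in>A. \<forall>u'\<in>A. u \<noteq> u' \<longrightarrow> G u \<inter> G u' = {}"
    and "\<forall>e\<in>N. 0 \<le> p e \<and> p e \<le> 1" "\<forall>u\<in>A. (\<Sum>e\<in>G u. p e) \<le> q"
    and "0 \<le> \<theta>" "real (card A) \<le> m" "0 \<le> q"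
  shows "(\<Sum>E\<in>Pow N. bernoulli_weight p E N * exp (\<theta> * card {u\<in>A. E \<inter> G u \<noteq> {}}))
         \<le> exp (m * q * (exp \<theta> - 1))"
proof -
  define c where "c = exp \<theta>"
  have c1: "1 \<le> c" unfolding c_def using assms(7) by simp
  have "exp (\<theta> * card {u\<in>A. E \<inter> G u \<noteq> {}}) = (\<Prod>u\<in>A. if E \<inter> G u \<noteq> {} then c else 1)" for E
    using prod.inter_filter[OF assms(1), of "\<lambda>_. c" "\<lambda>u. E \<inter> G u \<noteq> {}"]
    by (simp add: c_def exp_of_nat_mult[symmetric] ac_simps)
  then have "(\<Sum>E\<in>Pow N. bernoulli_weight p E N * exp (\<theta> * card {u\<in>A. E \<inter> G u \<noteq> {}}))
      = (\<Prod>u\<in>A. \<Sum>T\<in>Pow (G u). bernoulli_weight p T (G u) * (if T \<noteq> {} then c else 1))"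
    using sum_bernoulli_weight_prod_disjoint[OF assms(1-4), of p "\<lambda>u T. if T \<noteq> {} then c else 1"]
    by simp
  also have "\<dots> \<le> (\<Prod>u\<in>A. exp ((c - 1) * q))"
  proof (intro prod_mono conjI)
    fix u assume u: "u \<in> A"
    have finG: "finite (G u)" and pG: "\<forall>e\<in>G u. 0 \<le> p e \<and> p e \<le> 1"
      using u assms(2,3,5) finite_subset by blast+
    show "0 \<le> (\<Sum>T\<in>Pow (G u). bernoulli_weight p T (G u) * (if T \<noteq> {} then c else 1))"
      using c1 pG by (intro sum_nonneg mult_nonneg_nonneg bernoulli_weight_nonneg) auto
    have "exp ((c - 1) * (\<Sum>e\<in>G u. p e)) \<le> exp ((c - 1) * q)"
      using c1 u assms(6) by (simp add: mult_left_mono)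
    then show "(\<Sum>T\<in>Pow (G u). bernoulli_weight p T (G u) * (if T \<noteq> {} then c else 1))
        \<le> exp ((c - 1) * q)"
      using sum_bernoulli_weight_nonempty_le_exp[OF finG pG c1] by linarith
  qed
  also have "\<dots> = exp (real (card A) * ((c - 1) * q))" by (simp add: exp_of_nat_mult)
  also have "\<dots> \<le> exp (m * ((c - 1) * q))"
    using assms(8,9) c1 by (simp add: mult_right_mono)
  also have "\<dots> = exp (m * q * (exp \<theta> - 1))" unfolding c_def by (simp add: ac_simps)
  finally show ?thesis .
qed

section \<open>The exploration process\<close>

definition all_edges :: "nat \<Rightarrow> nat set set" where
  "all_edges n = pairs n \<union> triples n"

text \<open>The edges not yet examined once the vertices of \<open>D\<close> have been processed: a 2-edge is
  examined as soon as one of its vertices is processed, a 3-edge as soon as two of them are.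
  They are still independent of everything the process has seen so far.\<close>

definition unexplored_edges :: "nat \<Rightarrow> nat set \<Rightarrow> nat set set" where
  "unexplored_edges n D = {e \<in> all_edges n. card (e \<inter> D) \<le> (if card e = 2 then 0 else 1)}"

definition edge_prob :: "real \<Rightarrow> real \<Rightarrow> nat set \<Rightarrow> real" where
  "edge_prob p2 p3 e = (if card e = 2 then p2 else p3)"

definition new_active :: "nat \<Rightarrow> nat set set \<Rightarrow> nat set set \<Rightarrow> nat set \<Rightarrow> nat set \<Rightarrow> nat set" where
  "new_active n E2 E3 Y D = {u \<in> {..<n}. u \<notin> Y \<and> u \<notin> D \<and>
     ({Min Y, u} \<in> E2 \<or> (\<exists>w\<in>D. {Min Y, u, w} \<in> E3))}"

definition fresh_vertices :: "nat \<Rightarrow> nat set \<Rightarrow> nat set \<Rightarrow> nat set" where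
  "fresh_vertices n Y D = {u \<in> {..<n}. u \<notin> Y \<and> u \<notin> D}"

definition activating_edges :: "nat \<Rightarrow> nat \<Rightarrow> nat set \<Rightarrow> nat set set" where
  "activating_edges v u D = insert {v, u} ((\<lambda>w. {v, u, w}) ` D)"

primrec weighted_offspring :: "nat \<Rightarrow> nat \<Rightarrow> (nat \<Rightarrow> real) \<Rightarrow> nat \<Rightarrow> nat set set \<Rightarrow> nat set set \<Rightarrow>
    nat set \<times> nat set \<Rightarrow> real" where
  "weighted_offspring n 0 \<theta> j E2 E3 st = 0"
| "weighted_offspring n (Suc k) \<theta> j E2 E3 st = (if fst st = {} then 0 else
      \<theta> j * card (new_active n E2 E3 (fst st) (snd st))
      + weighted_offspring n k \<theta> (Suc j) E2 E3 (prop_step n E2 E3 st))"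

lemma prop_step_nonempty:
  "Y \<noteq> {} \<Longrightarrow>
   prop_step n E2 E3 (Y, D) = ((Y \<union> new_active n E2 E3 Y D) - {Min Y}, insert (Min Y) D)"
  unfolding prop_step_def new_active_def Let_def by simp

lemma snd_prop_step:
  "snd (prop_step n E2 E3 st) = (if fst st = {} then snd st else insert (Min (fst st)) (snd st))"
  by (cases st) (simp add: prop_step_def Let_def)

lemma finite_pairs: "finite (pairs n)"
  unfolding pairs_def by (rule finite_subset[of _ "Pow {..<n}"]) auto

lemma finite_triples: "finite (triples n)"
  unfolding triples_def by (rule finite_subset[of _ "Pow {..<n}"]) auto

lemma pairs_triples_disjoint: "pairs n \<inter> triples n = {}"
  unfolding pairs_def triples_def by auto

lemma finite_unexplored_edges: "finite (unexplored_edges n D)"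
  unfolding unexplored_edges_def all_edges_def using finite_pairs finite_triples by simp

lemma unexplored_edges_empty: "unexplored_edges n {} = all_edges n"
  unfolding unexplored_edges_def by auto

lemma unexplored_edges_antimono:
  assumes "D \<subseteq> D'" "finite D'"
  shows "unexplored_edges n D' \<subseteq> unexplored_edges n D"
proof
  fix e assume e: "e \<in> unexplored_edges n D'"
  then have "finite e"
    unfolding unexplored_edges_def all_edges_def pairs_def triples_def
    by (auto intro: card_ge_0_finite)
  then have "card (e \<inter> D) \<le> card (e \<inter> D')" using assms by (intro card_mono) auto
  then show "e \<in> unexplored_edges n D" using e unfolding unexplored_edges_def by auto
qed

lemma card_fresh_vertices_le: "card (fresh_vertices n Y D) \<le> n"
  using card_mono[OF finite_lessThan, of "fresh_vertices n Y D" n]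
  unfolding fresh_vertices_def by auto

context
  fixes n :: nat and Y D :: "nat set"
  assumes Y: "Y \<subseteq> {..<n}" and D: "D \<subseteq> {..<n}" and YD: "Y \<inter> D = {}" and Y_ne: "Y \<noteq> {}"
begin

lemma Min_active: "Min Y \<in> Y" "Min Y < n" "Min Y \<notin> D"
proof -
  show "Min Y \<in> Y" using Y_ne finite_subset[OF Y] by simp
  then show "Min Y < n" "Min Y \<notin> D" using Y YD by auto
qed

lemma pair_mem_pairs: "u \<in> fresh_vertices n Y D \<Longrightarrow> {Min Y, u} \<in> pairs n"
  using Min_active unfolding fresh_vertices_def pairs_def by (auto simp: card_insert_if)

lemma triple_mem_triples: "u \<in> fresh_vertices n Y D \<Longrightarrow> w \<in> D \<Longrightarrow> {Min Y, u, w} \<in> triples n"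
  using D Min_active unfolding fresh_vertices_def triples_def by (auto simp: card_insert_if)

lemma new_active_eq_hit:
  "new_active n (E \<inter> pairs n) (E \<inter> triples n) Y D
   = {u \<in> fresh_vertices n Y D. E \<inter> activating_edges (Min Y) u D \<noteq> {}}"
  using pair_mem_pairs triple_mem_triples
  unfolding new_active_def fresh_vertices_def activating_edges_def by auto

lemma activating_edges_subset:
  assumes u: "u \<in> fresh_vertices n Y D"
  shows "activating_edges (Min Y) u D
         \<subseteq> unexplored_edges n D - unexplored_edges n (insert (Min Y) D)"
proof
  fix e assume "e \<in> activating_edges (Min Y) u D"
  then consider "e = {Min Y, u}" | w where "w \<in> D" "e = {Min Y, u, w}"
    unfolding activating_edges_def by auto
  then show "e \<in> unexplored_edges n D - unexplored_edges n (insert (Min Y) D)"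
  proof cases
    case 1
    have "e \<inter> D = {}" "e \<inter> insert (Min Y) D = {Min Y}"
      using 1 u Min_active unfolding fresh_vertices_def by auto
    then show ?thesis using 1 pair_mem_pairs[OF u]
      unfolding unexplored_edges_def all_edges_def pairs_def by auto
  next
    case 2
    have "e \<inter> D = {w}" "e \<inter> insert (Min Y) D = {Min Y, w}" "Min Y \<noteq> w"
      using 2 u Min_active unfolding fresh_vertices_def by auto
    then show ?thesis using 2 triple_mem_triples[OF u]
      unfolding unexplored_edges_def all_edges_def triples_def by auto
  qed
qed

lemma activating_edges_disjoint:
  assumes "u \<in> fresh_vertices n Y D" "u' \<in> fresh_vertices n Y D" "u \<noteq> u'"
  shows "activating_edges (Min Y) u D \<inter> activating_edges (Min Y) u' D = {}"
proof -
  have "u \<notin> insert (Min Y) (insert u' D)" using assms Min_active unfolding fresh_vertices_def by auto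
  then show ?thesis unfolding activating_edges_def by auto
qed

lemma sum_edge_prob_activating_edges:
  assumes u: "u \<in> fresh_vertices n Y D"
  shows "(\<Sum>e\<in>activating_edges (Min Y) u D. edge_prob p2 p3 e) = p2 + real (card D) * p3"
proof -
  have finD: "finite D" using D finite_subset by blast
  have outside: "{Min Y, u} \<inter> D = {}" using u Min_active unfolding fresh_vertices_def by auto
  have "{Min Y, u} \<notin> (\<lambda>w. {Min Y, u, w}) ` D"
  proof
    assume "{Min Y, u} \<in> (\<lambda>w. {Min Y, u, w}) ` D"
    then obtain w where "w \<in> D" "{Min Y, u} = {Min Y, u, w}" by auto
    then have "w \<in> {Min Y, u} \<inter> D" by (metis IntI insertCI)
    then show False using outside by blast
  qed
  moreover have "inj_on (\<lambda>w. {Min Y, u, w}) D"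
  proof (rule inj_onI)
    fix x y assume "x \<in> D" "{Min Y, u, x} = {Min Y, u, y}"
    then have "x \<in> {Min Y, u, y}" "x \<notin> {Min Y, u}" using outside by (blast, blast)
    then show "x = y" by blast
  qed
  ultimately have "(\<Sum>e\<in>activating_edges (Min Y) u D. edge_prob p2 p3 e)
      = edge_prob p2 p3 {Min Y, u} + (\<Sum>w\<in>D. edge_prob p2 p3 {Min Y, u, w})"
    unfolding activating_edges_def using finD by (simp add: sum.reindex)
  also have "\<dots> = p2 + (\<Sum>w\<in>D. p3)"
    using pair_mem_pairs[OF u] triple_mem_triples[OF u]
    unfolding edge_prob_def pairs_def triples_def by simp
  finally show ?thesis by simp
qed

lemma weighted_offspring_Suc_eq:
  assumes T: "T \<subseteq> unexplored_edges n D - unexplored_edges n (insert (Min Y) D)"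
    and S: "S \<subseteq> unexplored_edges n (insert (Min Y) D)" and Ef: "Ef \<inter> unexplored_edges n D = {}"
  defines "H \<equiv> {u \<in> fresh_vertices n Y D. T \<inter> activating_edges (Min Y) u D \<noteq> {}}"
  shows "weighted_offspring n (Suc k) \<theta> j ((T \<union> S \<union> Ef) \<inter> pairs n) ((T \<union> S \<union> Ef) \<inter> triples n) (Y, D)
       = \<theta> j * card H + weighted_offspring n k \<theta> (Suc j)
           ((S \<union> (T \<union> Ef)) \<inter> pairs n) ((S \<union> (T \<union> Ef)) \<inter> triples n)
           ((Y \<union> H) - {Min Y}, insert (Min Y) D)"
proof -
  have hit: "(T \<union> S \<union> Ef) \<inter> activating_edges (Min Y) u D = T \<inter> activating_edges (Min Y) u D"
    if "u \<in> fresh_vertices n Y D" for u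
    using activating_edges_subset[OF that] T S Ef by blast
  have "new_active n ((T \<union> S \<union> Ef) \<inter> pairs n) ((T \<union> S \<union> Ef) \<inter> triples n) Y D = H"
    unfolding new_active_eq_hit H_def by (intro Collect_cong) (metis hit)
  moreover have "S \<union> (T \<union> Ef) = T \<union> S \<union> Ef" by auto
  ultimately show ?thesis using Y_ne by (simp add: prop_step_nonempty)
qed

lemma sum_bernoulli_weight_exp_card_new_active_le:
  fixes \<theta> :: real
  assumes p: "0 \<le> p2" "p2 \<le> 1" "0 \<le> p3" "p3 \<le> 1" and "0 \<le> \<theta>" "card D \<le> j"
  defines "N \<equiv> unexplored_edges n D - unexplored_edges n (insert (Min Y) D)"
  shows "(\<Sum>T\<in>Pow N. bernoulli_weight (edge_prob p2 p3) T N *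
           exp (\<theta> * card {u \<in> fresh_vertices n Y D. T \<inter> activating_edges (Min Y) u D \<noteq> {}}))
         \<le> exp (real n * (p2 + real j * p3) * (exp \<theta> - 1))"
proof (rule sum_bernoulli_weight_exp_card_hit_le)
  show "\<forall>u\<in>fresh_vertices n Y D. activating_edges (Min Y) u D \<subseteq> N"
    using activating_edges_subset unfolding N_def by blast
  show "\<forall>u\<in>fresh_vertices n Y D. \<forall>u'\<in>fresh_vertices n Y D. u \<noteq> u' \<longrightarrow>
      activating_edges (Min Y) u D \<inter> activating_edges (Min Y) u' D = {}"
    using activating_edges_disjoint by blast
  show "\<forall>u\<in>fresh_vertices n Y D. (\<Sum>e\<in>activating_edges (Min Y) u D. edge_prob p2 p3 e) \<le> p2 + real j * p3"
    using sum_edge_prob_activating_edges assms(6) p by (simp add: mult_right_mono)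
  show "real (card (fresh_vertices n Y D)) \<le> real n" using card_fresh_vertices_le by simp
  show "\<forall>e\<in>N. 0 \<le> edge_prob p2 p3 e \<and> edge_prob p2 p3 e \<le> 1"
    using p unfolding edge_prob_def by auto
qed (use assms in \<open>auto simp: fresh_vertices_def N_def finite_unexplored_edges\<close>)

end

section \<open>Exponential moment of the weighted offspring\<close>

text \<open>\<open>Ef\<close> is an arbitrary outcome of the edges examined before, so the bound holds conditionally
  on the history; one step reveals exactly the edges of \<open>unexplored_edges\<close> that become examined.\<close>

lemma sum_bernoulli_weight_exp_weighted_offspring_le:
  fixes \<theta> :: "nat \<Rightarrow> real"
  assumes p2: "0 \<le> p2" "p2 \<le> 1" and p3: "0 \<le> p3" "p3 \<le> 1" and \<theta>: "\<forall>j. 0 \<le> \<theta> j"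
    and "Y \<subseteq> {..<n}" "D \<subseteq> {..<n}" "Y \<inter> D = {}" "card D \<le> j"
    and "Ef \<inter> unexplored_edges n D = {}"
  shows "(\<Sum>E\<in>Pow (unexplored_edges n D).
            bernoulli_weight (edge_prob p2 p3) E (unexplored_edges n D) *
            exp (weighted_offspring n k \<theta> j ((E \<union> Ef) \<inter> pairs n) ((E \<union> Ef) \<inter> triples n) (Y, D)))
         \<le> (\<Prod>i<k. exp (real n * (p2 + real (j + i) * p3) * (exp (\<theta> (j + i)) - 1)))"
  using assms(6-)
proof (induction k arbitrary: j Y D Ef)
  case 0
  show ?case using sum_bernoulli_weight_eq_1[OF finite_unexplored_edges] by simp
next
  case (Suc k)
  let ?p = "edge_prob p2 p3" and ?R = "unexplored_edges n"
  let ?B = "\<lambda>j k. \<Prod>i<k. exp (real n * (p2 + real (j + i) * p3) * (exp (\<theta> (j + i)) - 1))"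
  have p: "\<forall>e. 0 \<le> ?p e \<and> ?p e \<le> 1" using p2 p3 unfolding edge_prob_def by auto
  have B_ge_1: "1 \<le> ?B j k" for j k using p2 p3 \<theta> by (intro prod_ge_1) auto
  then have B_nonneg: "0 \<le> ?B j k" for j k by (rule order_trans[OF zero_le_one])
  show ?case
  proof (cases "Y = {}")
    case True
    then show ?thesis
      using sum_bernoulli_weight_eq_1[OF finite_unexplored_edges] B_ge_1[of j "Suc k"]
      by (simp del: prod.lessThan_Suc)
  next
    case False
    define v where "v = Min Y"
    define D' where "D' = insert v D"
    define N where "N = ?R D - ?R D'"
    define hit where "hit T = {u \<in> fresh_vertices n Y D. T \<inter> activating_edges v u D \<noteq> {}}" for T
    note active = Min_active[OF Suc.prems(1-3) False, folded v_def]
    have finD: "finite D" using Suc.prems(2) finite_subset by blast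
    have R_split: "?R D = N \<union> ?R D'" "N \<inter> ?R D' = {}"
      using unexplored_edges_antimono[of D D'] finD unfolding N_def D'_def by auto
    have step: "weighted_offspring n (Suc k) \<theta> j ((T \<union> S \<union> Ef) \<inter> pairs n) ((T \<union> S \<union> Ef) \<inter> triples n) (Y, D)
        = \<theta> j * card (hit T) + weighted_offspring n k \<theta> (Suc j)
            ((S \<union> (T \<union> Ef)) \<inter> pairs n) ((S \<union> (T \<union> Ef)) \<inter> triples n) ((Y \<union> hit T) - {v}, D')"
      if "T \<subseteq> N" "S \<subseteq> ?R D'" for T S
      using weighted_offspring_Suc_eq[OF Suc.prems(1-3) False] that Suc.prems(5)
      unfolding hit_def v_def D'_def N_def by blast
    have IH: "(\<Sum>S\<in>Pow (?R D'). bernoulli_weight ?p S (?R D') *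
        exp (weighted_offspring n k \<theta> (Suc j) ((S \<union> (T \<union> Ef)) \<inter> pairs n)
               ((S \<union> (T \<union> Ef)) \<inter> triples n) ((Y \<union> hit T) - {v}, D')))
        \<le> ?B (Suc j) k" if "T \<subseteq> N" for T
    proof (rule Suc.IH)
      show "(Y \<union> hit T) - {v} \<subseteq> {..<n}" "D' \<subseteq> {..<n}" "((Y \<union> hit T) - {v}) \<inter> D' = {}"
        using Suc.prems(1-3) active unfolding hit_def D'_def fresh_vertices_def by auto
      show "card D' \<le> Suc j" using Suc.prems(4) finD unfolding D'_def by (simp add: card_insert_if)
      show "(T \<union> Ef) \<inter> ?R D' = {}" using that R_split Suc.prems(5) by auto
    qed
    have "(\<Sum>E\<in>Pow (?R D). bernoulli_weight ?p E (?R D) *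
        exp (weighted_offspring n (Suc k) \<theta> j ((E \<union> Ef) \<inter> pairs n) ((E \<union> Ef) \<inter> triples n) (Y, D)))
      = (\<Sum>T\<in>Pow N. \<Sum>S\<in>Pow (?R D'). bernoulli_weight ?p T N * bernoulli_weight ?p S (?R D') *
        exp (weighted_offspring n (Suc k) \<theta> j ((T \<union> S \<union> Ef) \<inter> pairs n) ((T \<union> S \<union> Ef) \<inter> triples n) (Y, D)))"
      unfolding R_split(1)
      by (rule sum_Pow_Un_bernoulli_weight) (use R_split finite_unexplored_edges in \<open>auto simp: N_def\<close>)
    also have "\<dots> = (\<Sum>T\<in>Pow N. bernoulli_weight ?p T N * exp (\<theta> j * card (hit T)) *
        (\<Sum>S\<in>Pow (?R D'). bernoulli_weight ?p S (?R D') *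
          exp (weighted_offspring n k \<theta> (Suc j) ((S \<union> (T \<union> Ef)) \<inter> pairs n)
                 ((S \<union> (T \<union> Ef)) \<inter> triples n) ((Y \<union> hit T) - {v}, D'))))"
      unfolding sum_distrib_left
      by (intro sum.cong refl) (simp only: Pow_iff step exp_add, simp add: ac_simps)
    also have "\<dots> \<le> (\<Sum>T\<in>Pow N. bernoulli_weight ?p T N * exp (\<theta> j * card (hit T))) * ?B (Suc j) k"
      unfolding sum_distrib_right
      by (intro sum_mono mult_left_mono IH mult_nonneg_nonneg bernoulli_weight_nonneg) (use p in auto)
    also have "\<dots> \<le> exp (real n * (p2 + real j * p3) * (exp (\<theta> j) - 1)) * ?B (Suc j) k"
      using sum_bernoulli_weight_exp_card_new_active_le[OF Suc.prems(1-3) False p2 p3 _ Suc.prems(4)] \<theta>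
      unfolding hit_def N_def D'_def v_def by (intro mult_right_mono B_nonneg) auto
    also have "\<dots> = ?B j (Suc k)"
      by (simp add: prod.lessThan_Suc_shift ac_simps del: prod.lessThan_Suc)
    finally show ?thesis .
  qed
qed

section \<open>Survival and the Chernoff bound\<close>

lemma card_snd_prop_state_le:
  "finite (snd (prop_state n E2 E3 Y0 t)) \<and> card (snd (prop_state n E2 E3 Y0 t)) \<le> t"
  by (induction t) (auto simp: prop_state_def snd_prop_step card_insert_if)

lemma component_large_imp_survives:
  assumes "K \<le> real (card (component n E2 E3 v1 v2))" "real k < K"
  shows "\<forall>i\<le>k. fst (prop_state n E2 E3 {v1, v2} i) \<noteq> {}"
proof (cases "\<exists>t. fst (prop_state n E2 E3 {v1, v2} t) = {}")
  case True
  have "card (component n E2 E3 v1 v2) \<le> stop_time n E2 E3 {v1, v2}"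
    unfolding component_def using card_snd_prop_state_le by blast
  then have "k < stop_time n E2 E3 {v1, v2}" using assms by linarith
  then show ?thesis unfolding stop_time_def by (meson le_less_trans not_less_Least)
qed auto

text \<open>The active set changes by \<open>|U\<^sub>t| - 1\<close> per step, so while it stays nonempty the
  partial sums of \<open>|U\<^sub>t|\<close> keep up with \<open>t\<close>; summation by parts with decreasing weights.\<close>

lemma weighted_offspring_ge_if_survives:
  fixes \<theta> :: "nat \<Rightarrow> real"
  assumes \<theta>: "\<forall>j. 0 \<le> \<theta> j" "\<forall>j. \<theta> (Suc j) \<le> \<theta> j"
    and "finite Y" "\<forall>i\<le>k. fst ((prop_step n E2 E3 ^^ i) (Y, D)) \<noteq> {}"
  shows "(\<Sum>i<k. \<theta> (j + i)) - \<theta> j * (real (card Y) - 1) \<le> weighted_offspring n k \<theta> j E2 E3 (Y, D)"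
  using assms(3-)
proof (induction k arbitrary: j Y D)
  case 0
  then have "1 \<le> real (card Y)" by (simp add: Suc_leI card_gt_0_iff)
  then show ?case using \<theta> by simp
next
  case (Suc k)
  have Y_ne: "Y \<noteq> {}" using Suc.prems(2) by force
  define U where "U = new_active n E2 E3 Y D"
  define Y' where "Y' = (Y \<union> U) - {Min Y}"
  have step: "prop_step n E2 E3 (Y, D) = (Y', insert (Min Y) D)"
    unfolding Y'_def U_def by (rule prop_step_nonempty[OF Y_ne])
  have U: "U \<inter> Y = {}" "finite U" unfolding U_def new_active_def by auto
  have "Min Y \<in> Y" "0 < card Y" using Suc.prems(1) Y_ne by (simp_all add: card_gt_0_iff)
  then have card_Y': "real (card Y') = real (card Y) + real (card U) - 1"
    using Suc.prems(1) U unfolding Y'_def by (simp add: card_Un_disjoint Int_commute of_nat_diff)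
  have survives: "\<forall>i\<le>k. fst ((prop_step n E2 E3 ^^ i) (Y', insert (Min Y) D)) \<noteq> {}"
    using Suc.prems(2) by (auto simp flip: step simp: funpow_Suc_right simp del: funpow.simps)
  then have "Y' \<noteq> {}" "finite Y'" using Suc.prems(1) U(2) unfolding Y'_def by (force, simp)
  then have "1 \<le> real (card Y')" by (simp add: Suc_leI card_gt_0_iff)
  then have "0 \<le> (\<theta> j - \<theta> (Suc j)) * (real (card Y') - 1)" using \<theta> by simp
  moreover have "(\<Sum>i<k. \<theta> (Suc j + i)) - \<theta> (Suc j) * (real (card Y') - 1)
      \<le> weighted_offspring n k \<theta> (Suc j) E2 E3 (Y', insert (Min Y) D)"
    using Suc.IH[of Y' "insert (Min Y) D" "Suc j"] survives \<open>finite Y'\<close> by simp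
  moreover have "(\<Sum>i<Suc k. \<theta> (j + i)) = \<theta> j + (\<Sum>i<k. \<theta> (Suc j + i))"
    by (simp add: sum.lessThan_Suc_shift del: sum.lessThan_Suc)
  ultimately show ?case using Y_ne step card_Y' by (simp add: U_def algebra_simps)
qed

lemma hyp_prob_eq_sum_bernoulli_weight:
  "hyp_prob n p2 p3 P = (\<Sum>E\<in>Pow (all_edges n). bernoulli_weight (edge_prob p2 p3) E (all_edges n) *
     (if P (E \<inter> pairs n) (E \<inter> triples n) then 1 else 0))"
proof -
  have weight: "bernoulli_weight (edge_prob p2 p3) T (pairs n) *
      bernoulli_weight (edge_prob p2 p3) S (triples n) = hyp_weight n p2 p3 T S" if "T \<subseteq> pairs n" "S \<subseteq> triples n" for T S
  proof -
    have "finite T" "finite S" using that finite_pairs finite_triples finite_subset by blast+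
    moreover have "(\<Prod>e\<in>T. edge_prob p2 p3 e) = p2 ^ card T" "(\<Prod>e\<in>S. edge_prob p2 p3 e) = p3 ^ card S"
      "(\<Prod>e\<in>pairs n - T. 1 - edge_prob p2 p3 e) = (1 - p2) ^ card (pairs n - T)"
      "(\<Prod>e\<in>triples n - S. 1 - edge_prob p2 p3 e) = (1 - p3) ^ card (triples n - S)"
      using that by (auto simp: edge_prob_def pairs_def triples_def subset_iff
          intro!: prod.cong[THEN trans, OF refl prod_constant])
    ultimately show ?thesis using that finite_pairs finite_triples
      unfolding bernoulli_weight_def hyp_weight_def by (simp add: card_Diff_subset)
  qed
  have "(\<Sum>E\<in>Pow (all_edges n). bernoulli_weight (edge_prob p2 p3) E (all_edges n) *
      (if P (E \<inter> pairs n) (E \<inter> triples n) then 1 else 0))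
    = (\<Sum>T\<in>Pow (pairs n). \<Sum>S\<in>Pow (triples n).
        bernoulli_weight (edge_prob p2 p3) T (pairs n) * bernoulli_weight (edge_prob p2 p3) S (triples n) *
        (if P ((T \<union> S) \<inter> pairs n) ((T \<union> S) \<inter> triples n) then 1 else 0))"
    unfolding all_edges_def
    by (rule sum_Pow_Un_bernoulli_weight[OF finite_pairs finite_triples pairs_triples_disjoint])
  also have "\<dots> = hyp_prob n p2 p3 P"
    unfolding hyp_prob_def
  proof (intro sum.cong refl)
    fix T S assume "T \<in> Pow (pairs n)" "S \<in> Pow (triples n)"
    moreover have "(T \<union> S) \<inter> pairs n = T" "(T \<union> S) \<inter> triples n = S"
      using calculation pairs_triples_disjoint by auto
    ultimately show "bernoulli_weight (edge_prob p2 p3) T (pairs n) *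
        bernoulli_weight (edge_prob p2 p3) S (triples n) *
        (if P ((T \<union> S) \<inter> pairs n) ((T \<union> S) \<inter> triples n) then 1 else 0)
      = (if P T S then hyp_weight n p2 p3 T S else 0)" using weight by simp
  qed
  finally show ?thesis by simp
qed

lemma hyp_prob_survives_le:
  fixes \<theta> :: "nat \<Rightarrow> real"
  assumes p2: "0 \<le> p2" "p2 \<le> 1" and p3: "0 \<le> p3" "p3 \<le> 1"
    and \<theta>: "\<forall>j. 0 \<le> \<theta> j" "\<forall>j. \<theta> (Suc j) \<le> \<theta> j"
    and v: "v1 < n" "v2 < n" "v1 \<noteq> v2"
    and survives: "\<And>E2 E3. P E2 E3 \<Longrightarrow> \<forall>i\<le>k. fst (prop_state n E2 E3 {v1, v2} i) \<noteq> {}"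
  shows "hyp_prob n p2 p3 P
    \<le> exp (\<theta> 0 - (\<Sum>i<k. \<theta> i) + (\<Sum>i<k. real n * (p2 + real i * p3) * (exp (\<theta> i) - 1)))"
proof -
  define M where "M = (\<Sum>i<k. \<theta> i) - \<theta> 0"
  let ?X = "\<lambda>E. weighted_offspring n k \<theta> 0 (E \<inter> pairs n) (E \<inter> triples n) ({v1, v2}, {})"
  have p: "\<forall>e. 0 \<le> edge_prob p2 p3 e \<and> edge_prob p2 p3 e \<le> 1"
    using p2 p3 unfolding edge_prob_def by auto
  have markov: "(if P (E \<inter> pairs n) (E \<inter> triples n) then 1 else 0) \<le> exp (?X E - M)" for E
  proof (cases "P (E \<inter> pairs n) (E \<inter> triples n)")
    case True
    then have "M \<le> ?X E"
      using weighted_offspring_ge_if_survives[OF \<theta>, of "{v1, v2}" k n "E \<inter> pairs n" "E \<inter> triples n" "{}" 0]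
        survives v unfolding M_def prop_state_def by simp
    then show ?thesis using True by simp
  qed simp
  have "hyp_prob n p2 p3 P
      \<le> (\<Sum>E\<in>Pow (all_edges n). bernoulli_weight (edge_prob p2 p3) E (all_edges n) * exp (?X E - M))"
    unfolding hyp_prob_eq_sum_bernoulli_weight
    by (intro sum_mono mult_left_mono markov bernoulli_weight_nonneg) (use p in auto)
  also have "\<dots> = exp (- M) *
      (\<Sum>E\<in>Pow (all_edges n). bernoulli_weight (edge_prob p2 p3) E (all_edges n) * exp (?X E))"
    by (simp add: sum_distrib_left exp_diff exp_minus field_simps)
  also have "\<dots> \<le> exp (- M) * (\<Prod>i<k. exp (real n * (p2 + real i * p3) * (exp (\<theta> i) - 1)))"
    using sum_bernoulli_weight_exp_weighted_offspring_le[OF p2 p3 \<theta>(1), of "{v1, v2}" n "{}" 0 "{}" k] v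
    by (simp add: unexplored_edges_empty)
  also have "\<dots> = exp (\<theta> 0 - (\<Sum>i<k. \<theta> i) + (\<Sum>i<k. real n * (p2 + real i * p3) * (exp (\<theta> i) - 1)))"
    unfolding M_def by (simp add: exp_sum[symmetric] exp_add)
  finally show ?thesis .
qed

section \<open>The exponent as a Riemann sum\<close>

definition rate :: "real \<Rightarrow> real" where
  "rate x = 1 - x + ln x"

definition rate_antideriv :: "real \<Rightarrow> real" where
  "rate_antideriv x = x * ln x - x\<^sup>2 / 2"

lemma I_const_eq_rate_antideriv:
  assumes "0 < \<epsilon>" "\<epsilon> \<le> 1"
  shows "I_const \<epsilon> r = (rate_antideriv 1 - rate_antideriv (1 - \<epsilon>)) / r"
proof -
  define S where "S = \<epsilon> - \<epsilon>\<^sup>2 / 2 + (if \<epsilon> = 1 then 0 else (1 - \<epsilon>) * ln (1 - \<epsilon>))"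
  have "(1 - \<epsilon>)\<^sup>2 / 2 = 1 / 2 - \<epsilon> + \<epsilon>\<^sup>2 / 2" by (simp add: power2_diff field_simps)
  then have "rate_antideriv 1 - rate_antideriv (1 - \<epsilon>) = - S"
    unfolding rate_antideriv_def S_def by (cases "\<epsilon> = 1") (auto simp: field_simps)
  then show ?thesis unfolding I_const_def S_def[symmetric] by simp
qed

lemma rate_mono:
  assumes "0 < a" "a \<le> z" "z \<le> 1"
  shows "rate a \<le> rate z"
proof -
  have "ln a - ln z = ln (a / z)" using assms by (simp add: ln_div)
  also have "\<dots> \<le> a / z - 1" using assms by (intro ln_le_minus_one) auto
  also have "\<dots> \<le> a - z"
  proof -
    have "(a - z) * (1 - z) \<le> 0" using assms by (intro mult_nonpos_nonneg) auto
    then have "a - z \<le> (a - z) * z" by (simp add: algebra_simps)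
    then show ?thesis using assms by (simp add: field_simps)
  qed
  finally show ?thesis unfolding rate_def by simp
qed

lemma rate_le_rate_antideriv_increment:
  assumes "0 < a" "a \<le> b" "b \<le> 1"
  shows "rate a * (b - a) \<le> rate_antideriv b - rate_antideriv a"
proof (cases "a = b")
  case False
  then have ab: "a < b" using assms by simp
  have "DERIV rate_antideriv x :> rate x" if "a \<le> x" for x
    using that assms unfolding rate_antideriv_def rate_def
    by (auto intro!: derivative_eq_intros simp: field_simps power2_eq_square)
  then obtain z where z: "a < z" "z < b" "rate_antideriv b - rate_antideriv a = (b - a) * rate z"
    using MVT2[OF ab] by fastforce
  have "rate a * (b - a) \<le> rate z * (b - a)"
    using rate_mono[of a z] z assms ab by (intro mult_right_mono) auto
  then show ?thesis using z(3) by (simp add: mult.commute)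
qed simp

lemma sum_rate_le_rate_antideriv:
  fixes a h :: real and k :: nat
  assumes "0 \<le> a" "0 < h" "a + h * (real k + 1) \<le> 1"
  shows "h * (\<Sum>i<k. rate (a + h * (real i + 1)))
         \<le> rate_antideriv (a + h * (real k + 1)) - rate_antideriv (a + h)"
proof -
  let ?\<mu> = "\<lambda>i::nat. a + h * (real i + 1)"
  have "h * (\<Sum>i<k. rate (?\<mu> i)) = (\<Sum>i<k. rate (?\<mu> i) * (?\<mu> (Suc i) - ?\<mu> i))"
    by (simp add: sum_distrib_left algebra_simps)
  also have "\<dots> \<le> (\<Sum>i<k. rate_antideriv (?\<mu> (Suc i)) - rate_antideriv (?\<mu> i))"
  proof (intro sum_mono rate_le_rate_antideriv_increment)
    fix i assume "i \<in> {..<k}"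
    then have "h * (real (Suc i) + 1) \<le> h * (real k + 1)" using assms by simp
    then show "?\<mu> (Suc i) \<le> 1" using assms by linarith
  qed (use assms in \<open>auto intro: add_nonneg_pos\<close>)
  also have "\<dots> = rate_antideriv (?\<mu> k) - rate_antideriv (?\<mu> 0)"
    by (rule sum_lessThan_telescope)
  finally show ?thesis by simp
qed

lemma rate_antideriv_le_near_1:
  assumes "0 < x" "x \<le> 1" "1 - h \<le> x"
  shows "rate_antideriv x \<le> rate_antideriv 1 + h"
proof -
  have "x * ln x \<le> 0" using assms by (simp add: mult_nonneg_nonpos)
  moreover have "0 \<le> (1 - x)\<^sup>2" by simp
  ultimately show ?thesis using assms unfolding rate_antideriv_def by (simp add: power2_eq_square algebra_simps)
qed

lemma rate_antideriv_diff_le: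
  assumes "0 \<le> a" "0 < h"
  shows "rate_antideriv a - rate_antideriv (a + h) \<le> a * h + h\<^sup>2 / 2 - h * ln h"
proof -
  have "a * ln a \<le> a * ln (a + h)" using assms by (cases "a = 0") (auto intro: mult_left_mono)
  moreover have "h * ln h \<le> h * ln (a + h)" using assms by (intro mult_left_mono) auto
  moreover have "(a + h) * ln (a + h) = a * ln (a + h) + h * ln (a + h)" "(a + h)\<^sup>2 = a\<^sup>2 + 2 * a * h + h\<^sup>2"
    by (simp_all add: distrib_right power2_sum)
  ultimately show ?thesis unfolding rate_antideriv_def by linarith
qed

text \<open>The exponent of the Chernoff bound for \<open>\<lambda>\<^sub>i = a + h i\<close> and the optimal weights
  \<open>\<theta>\<^sub>i = - ln \<lambda>\<^bsub>i+1\<^esub>\<close> (capped at \<open>0\<close> beyond the time \<open>k\<close> where \<open>\<lambda>\<close> reaches \<open>1\<close>).\<close>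

lemma chernoff_exponent_le:
  fixes a h :: real and k :: nat
  assumes a: "0 \<le> a" and h: "0 < h" and k: "a + h * (real k + 1) \<le> 1" "1 < a + h * (real k + 2)"
  defines "\<theta> \<equiv> \<lambda>j::nat. - ln (min 1 (a + h * (real j + 1)))"
  shows "\<theta> 0 - (\<Sum>i<k. \<theta> i) + (\<Sum>i<k. (a + h * real i) * (exp (\<theta> i) - 1))
         \<le> (rate_antideriv 1 - rate_antideriv a) / h - 2 * ln h + 4"
proof -
  let ?\<mu> = "\<lambda>i::nat. a + h * (real i + 1)"
  have \<mu>_pos: "0 < ?\<mu> i" for i using a h by (intro add_nonneg_pos) auto
  have \<theta>_eq: "\<theta> i = - ln (?\<mu> i)" if "i \<le> k" for i
  proof -
    have "h * (real i + 1) \<le> h * (real k + 1)" using that h by simp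
    then show ?thesis unfolding \<theta>_def using k by simp
  qed
  have "a + h + h * real k \<le> 1" "0 \<le> h * real k" using k(1) h by (simp_all add: algebra_simps)
  then have hk: "h * real k \<le> 1" and h1: "h \<le> 1" and a1: "a \<le> 1" using a h by linarith+
  have summand_le: "- \<theta> i + (a + h * real i) * (exp (\<theta> i) - 1) \<le> rate (?\<mu> i) + h" if "i < k" for i
  proof -
    have "(a + h * real i) * (exp (\<theta> i) - 1) = 1 - ?\<mu> i + h - h / ?\<mu> i"
      using \<theta>_eq[of i] that \<mu>_pos[of i] by (simp add: exp_minus field_simps)
    also have "\<dots> \<le> 1 - ?\<mu> i + h" using h \<mu>_pos[of i] by simp
    finally show ?thesis using \<theta>_eq[of i] that unfolding rate_def by simp
  qed
  have "- (\<Sum>i<k. \<theta> i) + (\<Sum>i<k. (a + h * real i) * (exp (\<theta> i) - 1))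
      \<le> (\<Sum>i<k. rate (?\<mu> i) + h)"
    unfolding sum_negf[symmetric] sum.distrib[symmetric] by (intro sum_mono summand_le) simp
  also have "\<dots> = (\<Sum>i<k. rate (?\<mu> i)) + h * real k"
    by (simp add: sum.distrib)
  also have "\<dots> \<le> (rate_antideriv (?\<mu> k) - rate_antideriv (a + h)) / h + 1"
  proof -
    have "(\<Sum>i<k. rate (?\<mu> i)) \<le> (rate_antideriv (?\<mu> k) - rate_antideriv (a + h)) / h"
      using sum_rate_le_rate_antideriv[OF a h k(1)] h by (simp add: pos_le_divide_eq mult.commute)
    then show ?thesis using hk by linarith
  qed
  also have "\<dots> \<le> ((rate_antideriv 1 - rate_antideriv a) + (h + a * h + h\<^sup>2 / 2 - h * ln h)) / h + 1"
    using rate_antideriv_le_near_1[of "?\<mu> k" h] rate_antideriv_diff_le[OF a h] \<mu>_pos[of k] k h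
    by (intro add_right_mono divide_right_mono) (auto simp: algebra_simps)
  also have "\<dots> = (rate_antideriv 1 - rate_antideriv a) / h + (2 + a + h / 2 - ln h)"
    using h by (simp add: field_simps power2_eq_square)
  finally have sum_le: "- (\<Sum>i<k. \<theta> i) + (\<Sum>i<k. (a + h * real i) * (exp (\<theta> i) - 1))
      \<le> (rate_antideriv 1 - rate_antideriv a) / h + (2 + a + h / 2 - ln h)" .
  have "\<theta> 0 \<le> - ln h" using \<theta>_eq[of 0] a h by simp
  then show ?thesis using sum_le h1 a1 by simp
qed

lemma hyp_prob_large_component_le:
  fixes \<epsilon> r :: real and n v1 v2 :: nat
  assumes \<epsilon>: "0 < \<epsilon>" "\<epsilon> \<le> 1" and r: "0 < r" and n: "2 \<le> n" and large: "r / \<epsilon> \<le> ln (real n)"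
    and v: "v1 < n" "v2 < n" "v1 \<noteq> v2"
  shows "hyp_prob n ((1 - \<epsilon>) / real n) (r / (real n * ln (real n)))
           (\<lambda>E2 E3. real (card (component n E2 E3 v1 v2)) \<ge> max 1 (2 * (9 + \<epsilon>) / r) * ln (real n))
         \<le> real n powr (I_const \<epsilon> r + (2 * ln (ln (real n) / r) + 4) / ln (real n))"
proof -
  define L where "L = ln (real n)"
  define a where "a = 1 - \<epsilon>"
  define h where "h = r / L"
  define k where "k = nat (\<lfloor>\<epsilon> / h\<rfloor> - 1)"
  define \<theta> where "\<theta> = (\<lambda>j::nat. - ln (min 1 (a + h * (real j + 1))))"
  have "0 < r / \<epsilon>" using r \<epsilon> by simp
  then have L: "0 < L" using large unfolding L_def by linarith
  have h: "0 < h" unfolding h_def using r L by simp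
  have a: "0 \<le> a" unfolding a_def using \<epsilon> by simp
  have "1 \<le> \<epsilon> / h" using large \<epsilon> r L unfolding h_def L_def by (simp add: field_simps)
  then have k_floor: "real k + 1 = of_int \<lfloor>\<epsilon> / h\<rfloor>" unfolding k_def by simp
  have k: "a + h * (real k + 1) \<le> 1" "1 < a + h * (real k + 2)"
  proof -
    have "real k + 1 \<le> \<epsilon> / h" "\<epsilon> / h < real k + 2" using k_floor by linarith+
    then have "h * (real k + 1) \<le> \<epsilon>" "\<epsilon> < h * (real k + 2)" using h by (simp_all add: field_simps)
    then show "a + h * (real k + 1) \<le> 1" "1 < a + h * (real k + 2)" unfolding a_def by simp_all
  qed
  define p2 where "p2 = (1 - \<epsilon>) / real n"
  define p3 where "p3 = r / (real n * L)"
  have "r \<le> r / \<epsilon>" using \<epsilon> r by (simp add: le_divide_eq)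
  moreover have "L \<le> real n * L" using n L by simp
  ultimately have "r \<le> real n * L" using large unfolding L_def by linarith
  then have p: "0 \<le> p2" "p2 \<le> 1" "0 \<le> p3" "p3 \<le> 1"
    using \<epsilon> n r L unfolding p2_def p3_def by (auto simp: divide_le_eq)
  have "0 \<le> \<theta> j \<and> \<theta> (Suc j) \<le> \<theta> j" for j
  proof -
    have "0 < min 1 (a + h * (real j + 1))" using a h by (simp add: add_nonneg_pos)
    moreover have "min 1 (a + h * (real j + 1)) \<le> min 1 (a + h * (real (Suc j) + 1))"
      using h by (intro min.mono) auto
    ultimately show ?thesis unfolding \<theta>_def by simp
  qed
  then have \<theta>: "\<forall>j. 0 \<le> \<theta> j" "\<forall>j. \<theta> (Suc j) \<le> \<theta> j" by auto
  have \<lambda>: "real n * (p2 + real i * p3) = a + h * real i" for i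
    using n L unfolding p2_def p3_def a_def h_def by (simp add: field_simps)
  have "real k < max 1 (2 * (9 + \<epsilon>) / r) * L"
  proof -
    have "real k < \<epsilon> / h" using k_floor by linarith
    also have "\<dots> \<le> (2 * (9 + \<epsilon>) / r) * L" using \<epsilon> r L unfolding h_def by (simp add: field_simps)
    also have "\<dots> \<le> max 1 (2 * (9 + \<epsilon>) / r) * L" using L by (intro mult_right_mono) auto
    finally show ?thesis .
  qed
  then have "hyp_prob n p2 p3 (\<lambda>E2 E3. real (card (component n E2 E3 v1 v2)) \<ge> max 1 (2 * (9 + \<epsilon>) / r) * L)
      \<le> exp (\<theta> 0 - (\<Sum>i<k. \<theta> i) + (\<Sum>i<k. real n * (p2 + real i * p3) * (exp (\<theta> i) - 1)))"
    by (intro hyp_prob_survives_le[OF p \<theta> v] component_large_imp_survives)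
  also have "\<dots> = exp (\<theta> 0 - (\<Sum>i<k. \<theta> i) + (\<Sum>i<k. (a + h * real i) * (exp (\<theta> i) - 1)))"
    unfolding \<lambda> ..
  also have "\<dots> \<le> exp ((rate_antideriv 1 - rate_antideriv a) / h - 2 * ln h + 4)"
    using chernoff_exponent_le[OF a h k] unfolding \<theta>_def by simp
  also have "\<dots> = exp (L * I_const \<epsilon> r + 2 * ln (L / r) + 4)"
    using r L unfolding I_const_eq_rate_antideriv[OF \<epsilon>] a_def h_def
    by (simp add: ln_div divide_divide_eq_right mult.commute)
  also have "\<dots> = real n powr (I_const \<epsilon> r + (2 * ln (L / r) + 4) / L)"
    using n L unfolding powr_def L_def[symmetric] by (simp add: field_simps)
  finally show ?thesis unfolding p2_def p3_def L_def .
qed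

theorem corollary1:
  fixes \<epsilon> r :: real
  assumes "0 < \<epsilon>" "\<epsilon> \<le> 1" "0 < r"
  shows "\<exists>g :: nat \<Rightarrow> real. g \<longlonglongrightarrow> 0 \<and>
    (\<forall>\<^sub>F n in sequentially. \<forall>v1 v2. v1 < n \<and> v2 < n \<and> v1 \<noteq> v2 \<longrightarrow>
       hyp_prob n ((1 - \<epsilon>) / real n) (r / (real n * ln (real n)))
         (\<lambda>E2 E3. real (card (component n E2 E3 v1 v2))
                    \<ge> max 1 (2 * (9 + \<epsilon>) / r) * ln (real n))
       \<le> real n powr (I_const \<epsilon> r + g n))"
proof (intro exI conjI)
  show "(\<lambda>n. (2 * ln (ln (real n) / r) + 4) / ln (real n)) \<longlonglongrightarrow> 0"
    using assms(3) by real_asymp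
  have "\<forall>\<^sub>F n in sequentially. r / \<epsilon> \<le> ln (real n)"
    using filterlim_compose[OF ln_at_top filterlim_real_sequentially] by (simp add: filterlim_at_top)
  then show "\<forall>\<^sub>F n in sequentially. \<forall>v1 v2. v1 < n \<and> v2 < n \<and> v1 \<noteq> v2 \<longrightarrow>
       hyp_prob n ((1 - \<epsilon>) / real n) (r / (real n * ln (real n)))
         (\<lambda>E2 E3. real (card (component n E2 E3 v1 v2)) \<ge> max 1 (2 * (9 + \<epsilon>) / r) * ln (real n))
       \<le> real n powr (I_const \<epsilon> r + (2 * ln (ln (real n) / r) + 4) / ln (real n))"
    using eventually_ge_at_top[of 2]
  proof eventually_elim
    case (elim n)
    then show ?case using hyp_prob_large_component_le[OF assms, of n] by blast
  qed
qed

end
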